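(* For every term $s$, every $k\in\mathbb N$ and every heap-machine state $\sigma$, if $\sigma_s\succ^k\sigma$ then $|\sigma|\le(k+1)(3k+4|s|)$.
   Context: Terms (de Bruijn): $s::=n\mid st\mid\lambda s$ with size $|n|=1+n$, $|\lambda s|=1+|s|$, $|st|=1+|s|+|t|$. Programs: lists of commands $\mathsf{ret},\mathsf{var}\,n,\mathsf{lam},\mathsf{app}$, sizes $|\mathsf{var}\,n|=1+n$, $|c|=1$ otherwise, $|P|=1+\sum_{c\in P}|c|$. Compilation: $\gamma n=[\mathsf{var}\,n]$, $\gamma(st)=\gamma s++\gamma t++[\mathsf{app}]$, $\gamma(\lambda s)=\mathsf{lam}::\gamma s++[\mathsf{ret}]$. $\varphi P:=\varphi_{0,[]}P$ with $\varphi_{0,Q}(\mathsf{ret}::P)=(Q,P)$, $\varphi_{k+1,Q}(\mathsf{ret}::P)=\varphi_{k,Q++[\mathsf{ret}]}P$, $\varphi_{k,Q}(\mathsf{lam}::P)=\varphi_{k+1,Q++[\mathsf{lam}]}P$, $\varphi_{k,Q}(c::P)=\varphi_{k,Q++[c]}P$ for $c$ a $\mathsf{var}$ or $\mathsf{app}$, undefined otherwise. Addresses are natural numbers; a closure is a pair $(P,a)$ (program, address); a heap entry is a pair $(g,b)$ (closure, address); a heap $H$ is a list of heap entries; $H[a]$ is the $a$-th entry for $1\le a\le|H|$, undefined otherwise. Lookup: if $H[a]=(g,b)$ then $H[a,0]=g$ and $H[a,n+1]=H[b,n]$; else undefined. Heap machine: states $(T,V,H)$ with $T,V$ lists of closures;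 steps $((\mathsf{var}\,n::P,a)::T,V,H)\succ((P,a)::T,g::V,H)$ if $H[a,n]=g$; $((\mathsf{lam}::P,a)::T,V,H)\succ((P',a)::T,(Q,a)::V,H)$ if $\varphi P=(Q,P')$; $((\mathsf{app}::P,a)::T,g::(Q,b)::V,H)\succ((Q,|H|+1)::(P,a)::T,V,H++[(g,b)])$; $(([],a)::T,V,H)\succ(T,V,H)$. Initial state $\sigma_s:=([(\gamma s,0)],[],[])$. Sizes: $|(P,a)|=|P|+a$ for closures, $|(g,b)|=|g|+b$ for heap entries, and the size of a state $(T,V,H)$ is the sum of the sizes of all closures in $T$ and $V$ and all entries in $H$. *)

theory Defs
  imports Main
begin

datatype tm = Var nat | App tm tm | Lam tm

fun size_tm :: "tm \<Rightarrow> nat" where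
  "size_tm (Var n) = 1 + n"
| "size_tm (App s t) = 1 + size_tm s + size_tm t"
| "size_tm (Lam s) = 1 + size_tm s"

datatype cmd = retC | varC nat | lamC | appC

type_synonym prog = "cmd list"

fun size_cmd :: "cmd \<Rightarrow> nat" where
  "size_cmd (varC n) = 1 + n"
| "size_cmd _ = 1"

definition size_prog :: "prog \<Rightarrow> nat" where
  "size_prog P = 1 + sum_list (map size_cmd P)"

fun gamma :: "tm \<Rightarrow> prog" where
  "gamma (Var n) = [varC n]"
| "gamma (App s t) = gamma s @ gamma t @ [appC]"
| "gamma (Lam s) = lamC # gamma s @ [retC]"

fun phi_aux :: "nat \<Rightarrow> prog \<Rightarrow> prog \<Rightarrow> (prog \<times> prog) option" where
  "phi_aux 0 Q (retC # P) = Some (Q, P)"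
| "phi_aux (Suc k) Q (retC # P) = phi_aux k (Q @ [retC]) P"
| "phi_aux k Q (lamC # P) = phi_aux (Suc k) (Q @ [lamC]) P"
| "phi_aux k Q (varC n # P) = phi_aux k (Q @ [varC n]) P"
| "phi_aux k Q (appC # P) = phi_aux k (Q @ [appC]) P"
| "phi_aux k Q [] = None"

definition phi :: "prog \<Rightarrow> (prog \<times> prog) option" where
  "phi P = phi_aux 0 [] P"

type_synonym clos = "prog \<times> nat"
type_synonym entry = "clos \<times> nat"
type_synonym heap = "entry list"

definition heap_get :: "heap \<Rightarrow> nat \<Rightarrow> entry option" where
  "heap_get H a = (if 1 \<le> a \<and> a \<le> length H then Some (H ! (a - 1)) else None)"

fun lookup :: "heap \<Rightarrow> nat \<Rightarrow> nat \<Rightarrow> clos option" where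
  "lookup H a 0 = (case heap_get H a of Some (g, b) \<Rightarrow> Some g | None \<Rightarrow> None)"
| "lookup H a (Suc n) = (case heap_get H a of Some (g, b) \<Rightarrow> lookup H b n | None \<Rightarrow> None)"

type_synonym state = "clos list \<times> clos list \<times> heap"

inductive step :: "state \<Rightarrow> state \<Rightarrow> bool" where
  stepVar: "lookup H a n = Some g \<Longrightarrow>
     step ((varC n # P, a) # T, V, H) ((P, a) # T, g # V, H)"
| stepLam: "phi P = Some (Q, P') \<Longrightarrow>
     step ((lamC # P, a) # T, V, H) ((P', a) # T, (Q, a) # V, H)"
| stepApp: "step ((appC # P, a) # T, g # (Q, b) # V, H)
     ((Q, length H + 1) # (P, a) # T, V, H @ [(g, b)])"
| stepNil: "step (([], a) # T, V, H) (T, V, H)"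

definition init :: "tm \<Rightarrow> state" where
  "init s = ([(gamma s, 0)], [], [])"

definition size_clos :: "clos \<Rightarrow> nat" where
  "size_clos c = size_prog (fst c) + snd c"

definition size_entry :: "entry \<Rightarrow> nat" where
  "size_entry e = size_clos (fst e) + snd e"

definition size_state :: "state \<Rightarrow> nat" where
  "size_state \<sigma> = (case \<sigma> of (T, V, H) \<Rightarrow>
     sum_list (map size_clos T) + sum_list (map size_clos V) + sum_list (map size_entry H))"

end

theory Submission
  imports Defs
begin

text \<open>Every program occurring in a reachable state is a contiguous piece of \<open>\<gamma> s\<close>, hence
  of size at most \<open>|\<gamma> s| \<le> 2|s|\<close>; every address is at most the heap length, which grows by
  at most one per step; and each step adds at most one closure or heap entry to the state.
  So after \<open>k\<close> steps the state consists of at most \<open>k + 1\<close> items, each of size at most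
  \<open>2|s| + 2k\<close>.\<close>

lemma size_prog_gamma: "size_prog (gamma s) \<le> 2 * size_tm s"
proof -
  have "sum_list (map size_cmd (gamma s)) + 1 \<le> 2 * size_tm s"
    by (induction s) auto
  then show ?thesis by (simp add: size_prog_def)
qed

lemma phi_aux_SomeD: "phi_aux k Q0 P = Some (Q, P') \<Longrightarrow> \<exists>R. Q = Q0 @ R \<and> P = R @ retC # P'"
  by (induction k Q0 P rule: phi_aux.induct) (fastforce+)

lemma phi_SomeD: "phi P = Some (Q, P') \<Longrightarrow> P = Q @ retC # P'"
  using phi_aux_SomeD[of 0 "[]" P Q P'] by (simp add: phi_def)

lemma heap_get_SomeD: "heap_get H a = Some e \<Longrightarrow> e \<in> set H"
  by (auto simp: heap_get_def split: if_splits)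

lemma lookup_SomeD: "lookup H a n = Some g \<Longrightarrow> \<exists>b. (g, b) \<in> set H"
proof (induction H a n rule: lookup.induct)
  case (1 H a)
  then show ?case by (auto dest: heap_get_SomeD split: option.splits)
next
  case (2 H a n)
  then show ?case by (auto split: option.splits)
qed

definition clos_bounded :: "nat \<Rightarrow> nat \<Rightarrow> clos \<Rightarrow> bool" where
  "clos_bounded B m c \<longleftrightarrow> size_prog (fst c) \<le> B \<and> snd c \<le> m"

lemma clos_bounded_mono: "clos_bounded B m c \<Longrightarrow> m \<le> m' \<Longrightarrow> clos_bounded B m' c"
  by (auto simp: clos_bounded_def)

text \<open>\<open>B\<close> bounds program sizes and \<open>k\<close> the number of steps taken so far.\<close>

fun state_bounded :: "nat \<Rightarrow> nat \<Rightarrow> state \<Rightarrow> bool" where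
  "state_bounded B k (T, V, H) \<longleftrightarrow>
     length H \<le> k \<and> length T + length V + length H \<le> k + 1 \<and>
     (\<forall>c\<in>set T. clos_bounded B (length H) c) \<and>
     (\<forall>c\<in>set V. clos_bounded B (length H) c) \<and>
     (\<forall>(g, b)\<in>set H. clos_bounded B (length H) g \<and> b \<le> length H)"

lemma state_bounded_step:
  assumes "step \<sigma> \<sigma>'" and "state_bounded B k \<sigma>"
  shows "state_bounded B (Suc k) \<sigma>'"
  using assms
proof (induction rule: step.induct)
  case (stepVar H a n g P T V)
  then obtain b where "(g, b) \<in> set H" using lookup_SomeD by blast
  with stepVar.prems have "clos_bounded B (length H) g" by auto
  moreover from stepVar.prems have "clos_bounded B (length H) (P, a)"
    by (auto simp: clos_bounded_def size_prog_def)
  ultimately show ?case using stepVar.prems by auto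
next
  case (stepLam P Q P' a T V H)
  from stepLam.hyps have "P = Q @ retC # P'" by (rule phi_SomeD)
  then have "size_prog Q \<le> size_prog (lamC # P)" "size_prog P' \<le> size_prog (lamC # P)"
    by (auto simp: size_prog_def)
  with stepLam.prems have "clos_bounded B (length H) (Q, a)" "clos_bounded B (length H) (P', a)"
    by (auto simp: clos_bounded_def)
  with stepLam.prems show ?case by auto
next
  case (stepApp P a T g Q b V H)
  let ?m = "length H + 1"
  from stepApp have "clos_bounded B (length H) (appC # P, a)" "clos_bounded B (length H) g"
    "clos_bounded B (length H) (Q, b)" by auto
  then have new: "clos_bounded B ?m (P, a)" "clos_bounded B ?m g" "clos_bounded B ?m (Q, ?m)"
    "b \<le> ?m"
    by (auto simp: clos_bounded_def size_prog_def)
  from stepApp have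
    "\<forall>c\<in>set T. clos_bounded B ?m c" "\<forall>c\<in>set V. clos_bounded B ?m c"
    "\<forall>(g', b')\<in>set H. clos_bounded B ?m g' \<and> b' \<le> ?m"
    by (auto intro: clos_bounded_mono)
  with new stepApp.prems show ?case by auto
qed auto

lemma state_bounded_steps:
  assumes "(step ^^ k) (init s) \<sigma>"
  shows "state_bounded (size_prog (gamma s)) k \<sigma>"
  using assms
proof (induction k arbitrary: \<sigma>)
  case 0
  then show ?case by (auto simp: init_def clos_bounded_def)
next
  case (Suc k)
  then obtain \<sigma>0 where "(step ^^ k) (init s) \<sigma>0" "step \<sigma>0 \<sigma>" by auto
  with Suc.IH show ?case by (blast intro: state_bounded_step)
qed

lemma sum_list_le_length_mult:
  "(\<And>x. x \<in> set xs \<Longrightarrow> f x \<le> c) \<Longrightarrow> (\<Sum>x\<leftarrow>xs. f x) \<le> length xs * (c :: nat)"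
  using sum_list_mono[of xs f "\<lambda>_. c"] by (simp add: sum_list_triv)

lemma size_state_le_if_state_bounded:
  assumes "state_bounded B k \<sigma>"
  shows "size_state \<sigma> \<le> (k + 1) * (B + 2 * k)"
proof -
  obtain T V H where \<sigma>: "\<sigma> = (T, V, H)" by (cases \<sigma>)
  define C where "C = B + 2 * k"
  from assms \<sigma> have bounded: "length H \<le> k" "length T + length V + length H \<le> k + 1"
    by simp_all
  from assms \<sigma> bounded(1) have
    "sum_list (map size_clos T) \<le> length T * C"
    "sum_list (map size_clos V) \<le> length V * C"
    "sum_list (map size_entry H) \<le> length H * C"
    by (auto intro!: sum_list_le_length_mult
        simp: C_def clos_bounded_def size_clos_def size_entry_def)
  then have "size_state \<sigma> \<le> (length T + length V + length H) * C"
    by (simp add: \<sigma> size_state_def algebra_simps)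
  also have "\<dots> \<le> (k + 1) * C"
    using bounded(2) by (rule mult_right_mono) simp
  finally show ?thesis by (simp add: C_def)
qed

theorem theorem17:
  fixes s :: tm and k :: nat and \<sigma> :: state
  assumes "(step ^^ k) (init s) \<sigma>"
  shows "size_state \<sigma> \<le> (k + 1) * (3 * k + 4 * size_tm s)"
proof -
  have "size_state \<sigma> \<le> (k + 1) * (size_prog (gamma s) + 2 * k)"
    using assms by (intro size_state_le_if_state_bounded state_bounded_steps)
  also have "\<dots> \<le> (k + 1) * (3 * k + 4 * size_tm s)"
    using size_prog_gamma[of s] by (intro mult_left_mono) simp_all
  finally show ?thesis .
qed

end
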